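(* Let $V$ be a real sequence and suppose that for some real $a$ with $|a|>1$, the equation $(-\Delta+V)\psi=0$ has a solution $\psi^-$ with $a^n\psi^-_n\to1$ as $n\to\infty$. Then: (i) every solution $\psi$ that is linearly independent of $\psi^-$ is exponentially increasing, in the sense that $a^{-n}\psi_n\to C\neq0$ as $n\to\infty$; (ii) for any solution $\psi$, the product $\psi_n\psi^-_n$ is bounded independently of $n$; (iii) given any boundary condition of the form $c\psi_1+d\psi_2=0$, if $0\notin\mathrm{sp}(-\Delta+V)$, then the Green matrix of $-\Delta+V$ on $n\ge1$ is uniformly bounded.
   Context: $(\Delta f)_n=f_{n+1}+f_{n-1}-2f_n$; $(-\Delta+V)\psi=0$ means $-\psi_{n+1}-\psi_{n-1}+(2+V_n)\psi_n=0$ for $n\ge1$. The Green matrix of $-\Delta+V$ on $n\ge1$ with the given boundary condition is $G_{mn}=\psi^+_{\min(m,n)}\psi^-_{\max(m,n)}/W[\psi^-,\psi^+]$, where $\psi^+$ is a solution satisfying the boundary condition and $W[\psi^-,\psi^+]=\psi^-_n\psi^+_{n+1}-\psi^-_{n+1}\psi^+_n$. *)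

theory Defs
  imports Complex_Main
begin

definition schr :: "(nat \<Rightarrow> real) \<Rightarrow> (nat \<Rightarrow> real) \<Rightarrow> nat \<Rightarrow> real" where
  "schr V f n = - f (n + 1) - f (n - 1) + (2 + V n) * f n"

definition is_sol :: "(nat \<Rightarrow> real) \<Rightarrow> (nat \<Rightarrow> real) \<Rightarrow> bool" where
  "is_sol V psi \<longleftrightarrow> (\<forall>n\<ge>1. schr V psi n = 0)"

definition lin_indep :: "(nat \<Rightarrow> real) \<Rightarrow> (nat \<Rightarrow> real) \<Rightarrow> bool" where
  "lin_indep f g \<longleftrightarrow> (\<forall>\<alpha> \<beta>. (\<forall>n. \<alpha> * f n + \<beta> * g n = 0) \<longrightarrow> \<alpha> = 0 \<and> \<beta> = 0)"

definition wronskian :: "(nat \<Rightarrow> real) \<Rightarrow> (nat \<Rightarrow> real) \<Rightarrow> nat \<Rightarrow> real" where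
  "wronskian f g n = f n * g (n + 1) - f (n + 1) * g n"

definition green :: "(nat \<Rightarrow> real) \<Rightarrow> (nat \<Rightarrow> real) \<Rightarrow> nat \<Rightarrow> nat \<Rightarrow> real" where
  "green psip psim m n = psip (min m n) * psim (max m n) / wronskian psim psip 1"

text \<open>l^2 on the half line n >= 1 (the value at index 0 is ignored).\<close>
definition l2 :: "(nat \<Rightarrow> real) \<Rightarrow> bool" where
  "l2 f \<longleftrightarrow> summable (\<lambda>n. (f (Suc n))\<^sup>2)"

definition l2norm :: "(nat \<Rightarrow> real) \<Rightarrow> real" where
  "l2norm f = sqrt (\<Sum>n. (f (Suc n))\<^sup>2)"

text \<open>Domain of the half-line operator -Delta+V on n >= 1 with boundary condition
  c psi_1 + d psi_2 = 0, realised via the ghost value f 0: for solutions of the equation at n = 1,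
  c psi_1 + d psi_2 = 0 is equivalent to d psi_0 = (c + d (2 + V_1)) psi_1.\<close>
definition op_dom :: "(nat \<Rightarrow> real) \<Rightarrow> real \<Rightarrow> real \<Rightarrow> (nat \<Rightarrow> real) \<Rightarrow> bool" where
  "op_dom V c d f \<longleftrightarrow> l2 f \<and> l2 (schr V f) \<and> d * f 0 = (c + d * (2 + V 1)) * f 1"

definition spectrum_op :: "(nat \<Rightarrow> real) \<Rightarrow> real \<Rightarrow> real \<Rightarrow> real set" where
  "spectrum_op V c d = {z. \<not> (
      (\<forall>g. l2 g \<longrightarrow> (\<exists>!f. op_dom V c d f \<and> (\<forall>n\<ge>1. schr V f n - z * f n = g n))) \<and>
      (\<exists>K. \<forall>f. op_dom V c d f \<longrightarrow> l2norm f \<le> K * l2norm (\<lambda>n. schr V f n - z * f n)))}"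

end

theory Submission
  imports Defs
begin

text \<open>The Wronskian W of two solutions is constant. Writing p n = a^n psim n \<rightarrow> 1 and
  q n = psi n / a^n, constancy of W becomes the first-order recurrence
  q (n+1) = W / (a p n) + p (n+1) / (a^2 p n) \<cdot> q n, whose coefficients converge to W/a and
  1/a^2; as |1/a^2| < 1 the recurrence is asymptotically a contraction, so q converges to
  W a / (a^2 - 1), which is nonzero exactly when psi and psim are independent.
  Then psi n psim n = q n p n converges, hence is bounded, and for i \<le> j
  |psi+ i psim j| = |q i| |p j| |a|^(i-j) is bounded uniformly, which bounds the Green matrix.\<close>

lemma contraction_excess_le_power:
  fixes e \<epsilon> r :: "nat \<Rightarrow> real"
  assumes rec: "\<And>n. n \<ge> N \<Longrightarrow> e (Suc n) = \<epsilon> n + r n * e n"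
    and r_le: "\<And>n. n \<ge> N \<Longrightarrow> \<bar>r n\<bar> \<le> \<rho>"
    and \<epsilon>_le: "\<And>n. n \<ge> N \<Longrightarrow> \<bar>\<epsilon> n\<bar> \<le> \<delta> * (1 - \<rho>)"
    and "0 \<le> \<rho>"
  shows "max (\<bar>e (N + k)\<bar> - \<delta>) 0 \<le> \<rho> ^ k * max (\<bar>e N\<bar> - \<delta>) 0"
proof (induction k)
  case 0
  then show ?case by simp
next
  case (Suc k)
  let ?n = "N + k"
  have "\<bar>e (Suc ?n)\<bar> \<le> \<bar>\<epsilon> ?n\<bar> + \<bar>r ?n\<bar> * \<bar>e ?n\<bar>"
    using rec[of ?n] by (simp add: abs_mult) (metis abs_mult abs_triangle_ineq)
  also have "\<dots> \<le> \<delta> * (1 - \<rho>) + \<rho> * \<bar>e ?n\<bar>"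
    using r_le \<epsilon>_le by (intro add_mono mult_right_mono) auto
  finally have "\<bar>e (Suc ?n)\<bar> - \<delta> \<le> \<rho> * (\<bar>e ?n\<bar> - \<delta>)"
    by (simp add: algebra_simps)
  also have "\<dots> \<le> \<rho> * max (\<bar>e ?n\<bar> - \<delta>) 0"
    using \<open>0 \<le> \<rho>\<close> by (intro mult_left_mono) auto
  also have "\<dots> \<le> \<rho> * (\<rho> ^ k * max (\<bar>e N\<bar> - \<delta>) 0)"
    using Suc \<open>0 \<le> \<rho>\<close> by (intro mult_left_mono) auto
  finally have "\<bar>e (Suc ?n)\<bar> - \<delta> \<le> \<rho> ^ Suc k * max (\<bar>e N\<bar> - \<delta>) 0"
    by simp
  moreover have "0 \<le> \<rho> ^ Suc k * max (\<bar>e N\<bar> - \<delta>) 0"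
    using \<open>0 \<le> \<rho>\<close> by simp
  ultimately show ?case
    by simp
qed

lemma perturbed_contraction_tendsto_zero:
  fixes e \<epsilon> r :: "nat \<Rightarrow> real"
  assumes rec: "\<And>n. n \<ge> N \<Longrightarrow> e (Suc n) = \<epsilon> n + r n * e n"
    and r_le: "\<And>n. n \<ge> N \<Longrightarrow> \<bar>r n\<bar> \<le> \<rho>"
    and "0 \<le> \<rho>" "\<rho> < 1"
    and \<epsilon>_lim: "\<epsilon> \<longlonglongrightarrow> 0"
  shows "e \<longlonglongrightarrow> 0"
  unfolding LIMSEQ_iff
proof (intro allI impI)
  fix \<eta> :: real
  assume "\<eta> > 0"
  define \<delta> where "\<delta> = \<eta> / 2"
  have "\<delta> > 0" "\<delta> * (1 - \<rho>) > 0"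
    using \<open>\<eta> > 0\<close> \<open>\<rho> < 1\<close> unfolding \<delta>_def by simp_all
  then obtain N' where N': "\<And>n. n \<ge> N' \<Longrightarrow> \<bar>\<epsilon> n\<bar> < \<delta> * (1 - \<rho>)"
    using \<epsilon>_lim unfolding LIMSEQ_iff by (metis diff_zero real_norm_def)
  define M where "M = max N N'"
  define excess where "excess = max (\<bar>e M\<bar> - \<delta>) 0"
  have excess_le: "max (\<bar>e (M + k)\<bar> - \<delta>) 0 \<le> \<rho> ^ k * excess" for k
    unfolding excess_def
    using rec r_le N' \<open>0 \<le> \<rho>\<close> unfolding M_def
    by (intro contraction_excess_le_power) (auto intro: less_imp_le)
  have "(\<lambda>k. \<rho> ^ k * excess) \<longlonglongrightarrow> 0 * excess"
    using \<open>0 \<le> \<rho>\<close> \<open>\<rho> < 1\<close> by (intro tendsto_intros LIMSEQ_power_zero) auto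
  then obtain K where K: "\<And>k. k \<ge> K \<Longrightarrow> \<bar>\<rho> ^ k * excess\<bar> < \<delta>"
    using \<open>\<delta> > 0\<close> unfolding LIMSEQ_iff by (metis diff_zero mult_zero_left real_norm_def)
  have "\<bar>e n\<bar> < \<eta>" if "n \<ge> M + K" for n
  proof -
    define k where "k = n - M"
    have k: "n = M + k" "k \<ge> K"
      using \<open>n \<ge> M + K\<close> unfolding k_def by auto
    have "\<bar>e n\<bar> - \<delta> \<le> \<rho> ^ k * excess"
      using excess_le[of k] k by simp
    also have "\<dots> < \<delta>"
      using K[OF \<open>k \<ge> K\<close>] by simp
    finally show ?thesis
      unfolding \<delta>_def by simp
  qed
  then show "\<exists>n0. \<forall>n\<ge>n0. norm (e n - 0) < \<eta>"
    by auto
qed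

lemma linear_recurrence_tendsto:
  fixes x b r :: "nat \<Rightarrow> real"
  assumes rec: "eventually (\<lambda>n. x (Suc n) = b n + r n * x n) sequentially"
    and b_lim: "b \<longlonglongrightarrow> B" and r_lim: "r \<longlonglongrightarrow> R" and "\<bar>R\<bar> < 1"
  shows "x \<longlonglongrightarrow> B / (1 - R)"
proof -
  define L where "L = B / (1 - R)"
  have "1 - R \<noteq> 0"
    using \<open>\<bar>R\<bar> < 1\<close> by auto
  then have "(1 - R) * L = B"
    unfolding L_def by simp
  then have B_eq: "B = L - R * L"
    by (simp add: algebra_simps)
  define \<rho> where "\<rho> = (1 + \<bar>R\<bar>) / 2"
  have "0 \<le> \<rho>" "\<rho> < 1" "\<bar>R\<bar> < \<rho>"
    using \<open>\<bar>R\<bar> < 1\<close> unfolding \<rho>_def by auto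
  obtain N1 where N1: "\<And>n. n \<ge> N1 \<Longrightarrow> x (Suc n) = b n + r n * x n"
    using rec by (auto simp: eventually_sequentially)
  obtain N2 where N2: "\<And>n. n \<ge> N2 \<Longrightarrow> \<bar>r n - R\<bar> < \<rho> - \<bar>R\<bar>"
    using r_lim \<open>\<bar>R\<bar> < \<rho>\<close> unfolding LIMSEQ_iff by (metis diff_gt_0_iff_gt real_norm_def)
  have error_rec: "x (Suc n) - L = ((b n - B) + (r n - R) * L) + r n * (x n - L)"
    if "n \<ge> max N1 N2" for n
    using N1[of n] that by (simp add: B_eq algebra_simps)
  have r_le: "\<bar>r n\<bar> \<le> \<rho>" if "n \<ge> max N1 N2" for n
    using N2[of n] that by linarith
  have "(\<lambda>n. (b n - B) + (r n - R) * L) \<longlonglongrightarrow> (B - B) + (R - R) * L"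
    by (intro tendsto_intros b_lim r_lim)
  then have "(\<lambda>n. (b n - B) + (r n - R) * L) \<longlonglongrightarrow> 0"
    by simp
  from perturbed_contraction_tendsto_zero[OF error_rec r_le \<open>0 \<le> \<rho>\<close> \<open>\<rho> < 1\<close> this]
  have "(\<lambda>n. x n - L) \<longlonglongrightarrow> 0" .
  then have "(\<lambda>n. (x n - L) + L) \<longlonglongrightarrow> 0 + L"
    by (intro tendsto_intros)
  then show ?thesis
    unfolding L_def by simp
qed

lemma is_sol_Suc_Suc:
  assumes "is_sol V f"
  shows "f (Suc (Suc n)) = (2 + V (Suc n)) * f (Suc n) - f n"
  using assms unfolding is_sol_def schr_def by (drule_tac x = "Suc n" in spec) simp

lemma is_sol_lincomb:
  assumes "is_sol V f" "is_sol V g"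
  shows "is_sol V (\<lambda>n. \<alpha> * f n + \<beta> * g n)"
proof -
  have "schr V (\<lambda>n. \<alpha> * f n + \<beta> * g n) n = \<alpha> * schr V f n + \<beta> * schr V g n" for n
    unfolding schr_def by (simp add: algebra_simps)
  with assms show ?thesis
    unfolding is_sol_def by simp
qed

lemma is_sol_eq_zero:
  assumes "is_sol V f" "f 0 = 0" "f 1 = 0"
  shows "f n = 0"
proof -
  have "f n = 0 \<and> f (Suc n) = 0"
    by (induction n) (use assms is_sol_Suc_Suc[OF assms(1)] in auto)
  then show ?thesis ..
qed

lemma wronskian_const:
  assumes "is_sol V f" "is_sol V g"
  shows "wronskian f g n = wronskian f g 0"
proof (induction n)
  case (Suc n)
  have "wronskian f g (Suc n) = wronskian f g n"
    unfolding wronskian_def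
    by (simp add: is_sol_Suc_Suc[OF assms(1)] is_sol_Suc_Suc[OF assms(2)] algebra_simps)
  with Suc show ?case by simp
qed simp

text \<open>If W = 0, the solutions g 0 f - f 0 g and g 1 f - f 1 g vanish at 0 and at 1, hence
  everywhere; by independence their coefficients vanish, so f 0 = f 1 = 0 and f itself is a
  nontrivial vanishing combination.\<close>

lemma wronskian_nonzero_if_lin_indep:
  assumes f: "is_sol V f" and g: "is_sol V g" and indep: "lin_indep f g"
  shows "wronskian g f 0 \<noteq> 0"
proof
  assume "wronskian g f 0 = 0"
  then have W0: "g 0 * f 1 = g 1 * f 0"
    unfolding wronskian_def by simp
  have trivial_comb: "\<alpha> = 0 \<and> \<beta> = 0"
    if "\<alpha> * f 0 + \<beta> * g 0 = 0" "\<alpha> * f 1 + \<beta> * g 1 = 0" for \<alpha> \<beta>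
  proof -
    have "\<forall>n. \<alpha> * f n + \<beta> * g n = 0"
      using is_sol_eq_zero[OF is_sol_lincomb[OF f g, of \<alpha> \<beta>]] that by simp
    then show ?thesis
      using indep unfolding lin_indep_def by blast
  qed
  have "g 0 = 0 \<and> - f 0 = 0"
    by (rule trivial_comb) (use W0 in \<open>simp_all add: mult.commute\<close>)
  moreover have "g 1 = 0 \<and> - f 1 = 0"
    by (rule trivial_comb) (use W0 in \<open>simp_all add: mult.commute\<close>)
  ultimately have "f 0 = 0" "f 1 = 0"
    by simp_all
  then show False
    using trivial_comb[of 1 0] by simp
qed

lemma scaled_sol_tendsto:
  fixes a :: real
  assumes "\<bar>a\<bar> > 1" and f: "is_sol V f" and g: "is_sol V g"
    and g_lim: "(\<lambda>n. a ^ n * g n) \<longlonglongrightarrow> 1"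
  shows "(\<lambda>n. f n / a ^ n) \<longlonglongrightarrow> wronskian g f 0 * a / (a\<^sup>2 - 1)"
proof -
  define W where "W = wronskian g f 0"
  define p where "p n = a ^ n * g n" for n
  define q where "q n = f n / a ^ n" for n
  have "a \<noteq> 0" using \<open>\<bar>a\<bar> > 1\<close> by auto
  have "a\<^sup>2 > 1"
    using \<open>\<bar>a\<bar> > 1\<close> by (metis abs_ge_zero one_less_power pos2 power2_abs)
  have p_lim: "p \<longlonglongrightarrow> 1"
    using g_lim unfolding p_def .
  have "eventually (\<lambda>n. p n > 1/2) sequentially"
    using order_tendstoD(1)[OF p_lim, of "1/2"] by simp
  then have rec: "eventually (\<lambda>n. q (Suc n) = W / (a * p n) + p (Suc n) / (a\<^sup>2 * p n) * q n)
      sequentially"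
  proof (rule eventually_mono)
    fix n
    assume "p n > 1/2"
    have "W = g n * f (Suc n) - g (Suc n) * f n"
      using wronskian_const[OF g f, of n] unfolding W_def wronskian_def by simp
    then have "W = a * p n * q (Suc n) - p (Suc n) * q n / a"
      using \<open>a \<noteq> 0\<close> unfolding p_def q_def by (simp add: field_simps)
    then show "q (Suc n) = W / (a * p n) + p (Suc n) / (a\<^sup>2 * p n) * q n"
      using \<open>p n > 1/2\<close> \<open>a \<noteq> 0\<close> by (simp add: field_simps power2_eq_square)
  qed
  have "(\<lambda>n. W / (a * p n)) \<longlonglongrightarrow> W / (a * 1)"
    using \<open>a \<noteq> 0\<close> by (intro tendsto_intros p_lim) auto
  moreover have "(\<lambda>n. p (Suc n) / (a\<^sup>2 * p n)) \<longlonglongrightarrow> 1 / (a\<^sup>2 * 1)"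
    using \<open>a \<noteq> 0\<close> by (intro tendsto_intros p_lim LIMSEQ_Suc) auto
  moreover have "\<bar>1 / (a\<^sup>2 * 1)\<bar> < 1"
    using \<open>a\<^sup>2 > 1\<close> by (simp add: divide_less_eq)
  ultimately have "q \<longlonglongrightarrow> (W / (a * 1)) / (1 - 1 / (a\<^sup>2 * 1))"
    by (rule linear_recurrence_tendsto[OF rec])
  also have "(W / (a * 1)) / (1 - 1 / (a\<^sup>2 * 1)) = W * a / (a\<^sup>2 - 1)"
    using \<open>a \<noteq> 0\<close> \<open>a\<^sup>2 > 1\<close> by (simp add: field_simps power2_eq_square)
  finally show ?thesis
    unfolding q_def W_def .
qed

lemma abs_mult_le_if_scaled_bounded:
  fixes a :: real
  assumes "\<bar>a\<bar> \<ge> 1" "i \<le> j"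
    and f_le: "\<And>n. \<bar>f n / a ^ n\<bar> \<le> K" and g_le: "\<And>n. \<bar>a ^ n * g n\<bar> \<le> L"
  shows "\<bar>f i * g j\<bar> \<le> K * L"
proof -
  have "a \<noteq> 0" using \<open>\<bar>a\<bar> \<ge> 1\<close> by auto
  have "0 \<le> K" "0 \<le> L"
    using f_le[of 0] g_le[of 0] by (meson abs_ge_zero order_trans)+
  have ratio_le: "\<bar>a ^ i / a ^ j\<bar> \<le> 1"
    using power_increasing[OF \<open>i \<le> j\<close> \<open>\<bar>a\<bar> \<ge> 1\<close>] \<open>a \<noteq> 0\<close>
    by (simp add: abs_divide power_abs)
  have "f i * g j = (f i / a ^ i) * (a ^ j * g j) * (a ^ i / a ^ j)"
    using \<open>a \<noteq> 0\<close> by (simp add: field_simps)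
  then have "\<bar>f i * g j\<bar> = \<bar>f i / a ^ i\<bar> * \<bar>a ^ j * g j\<bar> * \<bar>a ^ i / a ^ j\<bar>"
    by (simp only: abs_mult)
  also have "\<dots> \<le> K * L * 1"
    using f_le g_le ratio_le \<open>0 \<le> K\<close> \<open>0 \<le> L\<close>
    by (intro mult_mono) (auto intro: mult_nonneg_nonneg)
  finally show ?thesis by simp
qed

lemma green_bounded:
  fixes a :: real
  assumes "\<bar>a\<bar> > 1" and f: "is_sol V f" and g: "is_sol V g"
    and g_lim: "(\<lambda>n. a ^ n * g n) \<longlonglongrightarrow> 1"
  shows "\<exists>B. \<forall>m n. \<bar>green f g m n\<bar> \<le> B"
proof -
  obtain K where K: "\<And>n. \<bar>f n / a ^ n\<bar> \<le> K"
    using convergent_imp_Bseq[OF convergentI[OF scaled_sol_tendsto[OF assms]]]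
    by (metis Bseq_def real_norm_def)
  obtain L where L: "\<And>n. \<bar>a ^ n * g n\<bar> \<le> L"
    using convergent_imp_Bseq[OF convergentI[OF g_lim]] by (metis Bseq_def real_norm_def)
  have "\<bar>green f g m n\<bar> \<le> K * L / \<bar>wronskian g f 1\<bar>" for m n
    unfolding green_def abs_divide
    using \<open>\<bar>a\<bar> > 1\<close> K L by (intro divide_right_mono abs_mult_le_if_scaled_bounded) auto
  then show ?thesis by blast
qed

text \<open>Part (iii) holds for every solution psip: the boundary condition and the spectral
  hypothesis serve to make W \<noteq> 0, but when W = 0 the Green matrix is 0 anyway since x / 0 = 0.\<close>

theorem corollary1:
  fixes V psim :: "nat \<Rightarrow> real" and a :: real
  assumes "\<bar>a\<bar> > 1"
    and "is_sol V psim"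
    and "(\<lambda>n. a ^ n * psim n) \<longlonglongrightarrow> 1"
  shows "(\<forall>psi. is_sol V psi \<and> lin_indep psi psim \<longrightarrow>
            (\<exists>C. C \<noteq> 0 \<and> (\<lambda>n. psi n / a ^ n) \<longlonglongrightarrow> C))
       \<and> (\<forall>psi. is_sol V psi \<longrightarrow> (\<exists>B. \<forall>n. \<bar>psi n * psim n\<bar> \<le> B))
       \<and> (\<forall>c d psip. (c, d) \<noteq> (0, 0) \<and> 0 \<notin> spectrum_op V c d \<and>
            is_sol V psip \<and> psip \<noteq> (\<lambda>n. 0) \<and> c * psip 1 + d * psip 2 = 0 \<longrightarrow>
            (\<exists>B. \<forall>m n. m \<ge> 1 \<and> n \<ge> 1 \<longrightarrow> \<bar>green psip psim m n\<bar> \<le> B))"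
proof (intro conjI allI impI)
  have "a\<^sup>2 > 1"
    using \<open>\<bar>a\<bar> > 1\<close> by (metis abs_ge_zero one_less_power pos2 power2_abs)
  fix psi
  assume "is_sol V psi \<and> lin_indep psi psim"
  then have "wronskian psim psi 0 * a / (a\<^sup>2 - 1) \<noteq> 0"
    using wronskian_nonzero_if_lin_indep[OF _ assms(2)] \<open>\<bar>a\<bar> > 1\<close> \<open>a\<^sup>2 > 1\<close> by auto
  then show "\<exists>C. C \<noteq> 0 \<and> (\<lambda>n. psi n / a ^ n) \<longlonglongrightarrow> C"
    using scaled_sol_tendsto[OF assms(1) _ assms(2,3)] \<open>is_sol V psi \<and> _\<close> by blast
next
  fix psi
  assume "is_sol V psi"
  have "(\<lambda>n. psi n / a ^ n * (a ^ n * psim n)) \<longlonglongrightarrow> wronskian psim psi 0 * a / (a\<^sup>2 - 1) * 1"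
    by (intro tendsto_mult scaled_sol_tendsto[OF assms(1) \<open>is_sol V psi\<close> assms(2,3)] assms(3))
  moreover have "psi n / a ^ n * (a ^ n * psim n) = psi n * psim n" for n
    using \<open>\<bar>a\<bar> > 1\<close> by auto
  ultimately have "convergent (\<lambda>n. psi n * psim n)"
    by (auto intro: convergentI)
  then show "\<exists>B. \<forall>n. \<bar>psi n * psim n\<bar> \<le> B"
    by (metis convergent_imp_Bseq Bseq_def real_norm_def)
next
  fix c d psip
  assume "(c, d) \<noteq> (0, 0) \<and> 0 \<notin> spectrum_op V c d \<and> is_sol V psip \<and> psip \<noteq> (\<lambda>n. 0)
    \<and> c * psip 1 + d * psip 2 = 0"
  then show "\<exists>B. \<forall>m n. m \<ge> 1 \<and> n \<ge> 1 \<longrightarrow> \<bar>green psip psim m n\<bar> \<le> B"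
    using green_bounded[OF assms(1) _ assms(2,3)] by blast
qed

end
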